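(* Let $\mathcal{X}=\{1,\dots,n\}$, let $\pi$ be a strictly positive probability distribution on $\mathcal{X}$, let $P$ be a $\pi$-reversible transition matrix and let $\alpha\in[0,1]$. For every $S\subset\mathcal{X}$ with $S\neq\emptyset,\mathcal{X}$, $$\|A_\alpha(S)-\Pi\|_{F,\pi}^2=\alpha^2\operatorname{Tr}(P^2)-2\alpha(1-\alpha)g(S)+1-2\alpha^2=F_1(S)-F_2(S),$$ where $$F_1(S)=2\alpha(1-\alpha)\Big(\frac{1}{\pi(S)}\sum_{x,y\in S'}\pi(x)P(x,y)+\frac{1}{\pi(S')}\sum_{x,y\in S}\pi(x)P(x,y)\Big),$$ $$F_2(S)=\frac{2\alpha(1-\alpha)}{\pi(S)\pi(S')}+6\alpha^2-4\alpha-1-\alpha^2\operatorname{Tr}(P^2),$$ and both $F_1$ and $F_2$ are supermodular on $\{S\subseteq\mathcal{X}:0<\pi(S)<1\}$.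
   Context: $S'=\mathcal{X}\setminus S$; $g(S)=\frac{1}{\pi(S)\pi(S')}\sum_{x\in S,\,y\in S'}\pi(x)P(x,y)$. $\pi$-reversible means $\pi(x)P(x,y)=\pi(y)P(y,x)$. $A_\alpha(S)=\alpha P+(1-\alpha)G_S$ where $G_S(x,y)=\pi(y)/\pi(\mathcal{O}(x))$ if $y\in\mathcal{O}(x)$ and $0$ otherwise, $\mathcal{O}(x)\in\{S,S'\}$ the block containing $x$. $\Pi$ is the matrix with every row equal to $\pi$; $\|M\|_{F,\pi}^2=\operatorname{Tr}(M^*M)$ with $M^*(x,y)=\pi(y)M(y,x)/\pi(x)$. A set function $f$ is supermodular if $f(A\cap B)+f(A\cup B)\ge f(A)+f(B)$. *)

theory Defs
  imports Complex_Main
begin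

(* State space X = {1..n}; matrices are functions nat => nat => real, only entries on X matter. *)

definition piS :: "(nat \<Rightarrow> real) \<Rightarrow> nat set \<Rightarrow> real" where
  "piS \<pi> S = (\<Sum>x\<in>S. \<pi> x)"

definition prob_dist_pos :: "nat \<Rightarrow> (nat \<Rightarrow> real) \<Rightarrow> bool" where
  "prob_dist_pos n \<pi> \<longleftrightarrow> (\<forall>x\<in>{1..n}. \<pi> x > 0) \<and> (\<Sum>x\<in>{1..n}. \<pi> x) = 1"

definition transition_matrix :: "nat \<Rightarrow> (nat \<Rightarrow> nat \<Rightarrow> real) \<Rightarrow> bool" where
  "transition_matrix n P \<longleftrightarrow>
     (\<forall>x\<in>{1..n}. \<forall>y\<in>{1..n}. P x y \<ge> 0) \<and> (\<forall>x\<in>{1..n}. (\<Sum>y\<in>{1..n}. P x y) = 1)"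

definition reversible :: "nat \<Rightarrow> (nat \<Rightarrow> real) \<Rightarrow> (nat \<Rightarrow> nat \<Rightarrow> real) \<Rightarrow> bool" where
  "reversible n \<pi> P \<longleftrightarrow> (\<forall>x\<in>{1..n}. \<forall>y\<in>{1..n}. \<pi> x * P x y = \<pi> y * P y x)"

definition compl :: "nat \<Rightarrow> nat set \<Rightarrow> nat set" where
  "compl n S = {1..n} - S"

definition gS :: "nat \<Rightarrow> (nat \<Rightarrow> real) \<Rightarrow> (nat \<Rightarrow> nat \<Rightarrow> real) \<Rightarrow> nat set \<Rightarrow> real" where
  "gS n \<pi> P S = (\<Sum>x\<in>S. \<Sum>y\<in>compl n S. \<pi> x * P x y) / (piS \<pi> S * piS \<pi> (compl n S))"

definition blk :: "nat \<Rightarrow> nat set \<Rightarrow> nat \<Rightarrow> nat set" where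
  "blk n S x = (if x \<in> S then S else compl n S)"

definition G_S :: "nat \<Rightarrow> (nat \<Rightarrow> real) \<Rightarrow> nat set \<Rightarrow> nat \<Rightarrow> nat \<Rightarrow> real" where
  "G_S n \<pi> S x y = (if y \<in> blk n S x then \<pi> y / piS \<pi> (blk n S x) else 0)"

definition A_alpha :: "nat \<Rightarrow> (nat \<Rightarrow> real) \<Rightarrow> (nat \<Rightarrow> nat \<Rightarrow> real) \<Rightarrow> real \<Rightarrow> nat set \<Rightarrow> nat \<Rightarrow> nat \<Rightarrow> real" where
  "A_alpha n \<pi> P \<alpha> S x y = \<alpha> * P x y + (1 - \<alpha>) * G_S n \<pi> S x y"

definition PiM :: "(nat \<Rightarrow> real) \<Rightarrow> nat \<Rightarrow> nat \<Rightarrow> real" where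
  "PiM \<pi> x y = \<pi> y"

definition mmult :: "nat \<Rightarrow> (nat \<Rightarrow> nat \<Rightarrow> real) \<Rightarrow> (nat \<Rightarrow> nat \<Rightarrow> real) \<Rightarrow> nat \<Rightarrow> nat \<Rightarrow> real" where
  "mmult n M N x y = (\<Sum>z\<in>{1..n}. M x z * N z y)"

definition mtrace :: "nat \<Rightarrow> (nat \<Rightarrow> nat \<Rightarrow> real) \<Rightarrow> real" where
  "mtrace n M = (\<Sum>x\<in>{1..n}. M x x)"

(* adjoint in L^2(pi): M^*(x,y) = pi(y) M(y,x) / pi(x) *)
definition adjoint :: "(nat \<Rightarrow> real) \<Rightarrow> (nat \<Rightarrow> nat \<Rightarrow> real) \<Rightarrow> nat \<Rightarrow> nat \<Rightarrow> real" where
  "adjoint \<pi> M x y = \<pi> y * M y x / \<pi> x"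

definition frob_sq :: "nat \<Rightarrow> (nat \<Rightarrow> real) \<Rightarrow> (nat \<Rightarrow> nat \<Rightarrow> real) \<Rightarrow> real" where
  "frob_sq n \<pi> M = mtrace n (mmult n (adjoint \<pi> M) M)"

definition msub :: "(nat \<Rightarrow> nat \<Rightarrow> real) \<Rightarrow> (nat \<Rightarrow> nat \<Rightarrow> real) \<Rightarrow> nat \<Rightarrow> nat \<Rightarrow> real" where
  "msub M N x y = M x y - N x y"

definition F1 :: "nat \<Rightarrow> (nat \<Rightarrow> real) \<Rightarrow> (nat \<Rightarrow> nat \<Rightarrow> real) \<Rightarrow> real \<Rightarrow> nat set \<Rightarrow> real" where
  "F1 n \<pi> P \<alpha> S = 2 * \<alpha> * (1 - \<alpha>) *
     ((\<Sum>x\<in>compl n S. \<Sum>y\<in>compl n S. \<pi> x * P x y) / piS \<pi> S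
      + (\<Sum>x\<in>S. \<Sum>y\<in>S. \<pi> x * P x y) / piS \<pi> (compl n S))"

definition F2 :: "nat \<Rightarrow> (nat \<Rightarrow> real) \<Rightarrow> (nat \<Rightarrow> nat \<Rightarrow> real) \<Rightarrow> real \<Rightarrow> nat set \<Rightarrow> real" where
  "F2 n \<pi> P \<alpha> S = 2 * \<alpha> * (1 - \<alpha>) / (piS \<pi> S * piS \<pi> (compl n S))
     + 6 * \<alpha>^2 - 4 * \<alpha> - 1 - \<alpha>^2 * mtrace n (mmult n P P)"

(* supermodularity on a (not necessarily lattice-closed) family D: the inequality is
   required whenever A, B, A \<inter> B, A \<union> B all lie in D *)
definition supermodular_on :: "'a set set \<Rightarrow> ('a set \<Rightarrow> real) \<Rightarrow> bool" where
  "supermodular_on D f \<longleftrightarrow>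
     (\<forall>A\<in>D. \<forall>B\<in>D. A \<inter> B \<in> D \<longrightarrow> A \<union> B \<in> D \<longrightarrow> f (A \<inter> B) + f (A \<union> B) \<ge> f A + f B)"

end

theory Submission
  imports Defs
begin

(* In the inner product <M, N> = sum_(z,x) pi(z) M(z,x) N(z,x) / pi(x), for which
   frob_sq M = <M, M>, the matrix A_alpha(S) - Pi = alpha P + (1 - alpha) G_S - Pi expands into
   six inner products. Reversibility gives <P, P> = Tr(P^2); every stochastic M has <M, Pi> = 1;
   and G_S averages over the block of x, so <G_S, G_S> = 2 and <P, G_S> = Q(S,S)/pi(S) +
   Q(S',S')/pi(S') = 2 - g(S), using the ergodic flow identities Q(S,S) = pi(S) - Q(S,S') and
   Q(S',S') = pi(S') - Q(S,S'). The same identities give F1 - F2.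
   For supermodularity: pi is modular and increasing and 1/x is convex and decreasing, so
   1/pi(S) and 1/pi(S') are supermodular; F2 is a nonnegative combination of these, and F1 of
   h(S) and h(S') with h(S) = Q(S,S) / pi(S'), a product of two nonnegative increasing
   supermodular functions. *)

lemma reciprocal_add_le_extremes:
  fixes p q r s :: real
  assumes "0 < q" "q \<le> r" "q \<le> s" "r \<le> p" "s \<le> p" "p + q = r + s"
  shows "1/r + 1/s \<le> 1/q + 1/p"
proof -
  have r: "r = p + q - s" using assms(6) by simp
  have "r * s - p * q = (p - s) * (s - q)" unfolding r by (simp add: algebra_simps)
  also have "\<dots> \<ge> 0" using assms by simp
  finally have "p * q \<le> r * s" by simp
  have pos: "0 < p" "0 < r" "0 < s" using assms by linarith+
  have "1/r + 1/s = (r + s) / (r * s)" using pos by (simp add: field_simps)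
  also have "\<dots> \<le> (r + s) / (p * q)"
    using \<open>p * q \<le> r * s\<close> assms pos by (intro divide_left_mono) auto
  also have "\<dots> = 1/q + 1/p" using assms(1,6) pos by (simp add: field_simps)
  finally show ?thesis .
qed

lemma supermodular_on_cong:
  assumes "\<And>S. S \<in> D \<Longrightarrow> f S = g S"
  shows "supermodular_on D f \<longleftrightarrow> supermodular_on D g"
  using assms unfolding supermodular_on_def by simp

lemma supermodular_on_add:
  assumes "supermodular_on D f" "supermodular_on D g"
  shows "supermodular_on D (\<lambda>S. f S + g S)"
  unfolding supermodular_on_def
proof (intro ballI impI)
  fix A B assume "A \<in> D" "B \<in> D" "A \<inter> B \<in> D" "A \<union> B \<in> D"
  then have "f A + f B \<le> f (A \<inter> B) + f (A \<union> B)" "g A + g B \<le> g (A \<inter> B) + g (A \<union> B)"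
    using assms unfolding supermodular_on_def by auto
  then show "f A + g A + (f B + g B) \<le> f (A \<inter> B) + g (A \<inter> B) + (f (A \<union> B) + g (A \<union> B))"
    by linarith
qed

lemma supermodular_on_affine:
  assumes "0 \<le> c" "supermodular_on D f"
  shows "supermodular_on D (\<lambda>S. c * f S + k)"
  unfolding supermodular_on_def
proof (intro ballI impI)
  fix A B assume "A \<in> D" "B \<in> D" "A \<inter> B \<in> D" "A \<union> B \<in> D"
  then have "c * (f A + f B) \<le> c * (f (A \<inter> B) + f (A \<union> B))"
    using assms unfolding supermodular_on_def by (intro mult_left_mono) auto
  then show "c * f A + k + (c * f B + k) \<le> c * f (A \<inter> B) + k + (c * f (A \<union> B) + k)"
    by (simp add: algebra_simps)
qed

lemma supermodular_on_compl:
  assumes "supermodular_on D f" "\<And>S. S \<in> D \<Longrightarrow> X - S \<in> D"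
  shows "supermodular_on D (\<lambda>S. f (X - S))"
  unfolding supermodular_on_def
proof (intro ballI impI)
  fix A B assume "A \<in> D" "B \<in> D" "A \<inter> B \<in> D" "A \<union> B \<in> D"
  then have "X - A \<in> D" "X - B \<in> D" "(X - A) \<inter> (X - B) \<in> D" "(X - A) \<union> (X - B) \<in> D"
    using assms(2) by (simp_all add: Diff_Int[symmetric] Diff_Un[symmetric])
  then have "f (X - A) + f (X - B) \<le> f ((X - A) \<inter> (X - B)) + f ((X - A) \<union> (X - B))"
    using assms(1) unfolding supermodular_on_def by blast
  then show "f (X - A) + f (X - B) \<le> f (X - (A \<inter> B)) + f (X - (A \<union> B))"
    by (simp add: Diff_Int Diff_Un)
qed

lemma supermodular_on_mult:
  assumes f: "supermodular_on D f" "mono_on D f" "\<And>S. S \<in> D \<Longrightarrow> 0 \<le> f S"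
    and g: "supermodular_on D g" "mono_on D g" "\<And>S. S \<in> D \<Longrightarrow> 0 \<le> g S"
  shows "supermodular_on D (\<lambda>S. f S * g S)"
  unfolding supermodular_on_def
proof (intro ballI impI)
  fix A B assume D: "A \<in> D" "B \<in> D" "A \<inter> B \<in> D" "A \<union> B \<in> D"
  have f_le: "f (A \<inter> B) \<le> f A" "f (A \<inter> B) \<le> f B"
    using D by (auto intro: mono_onD[OF f(2)])
  have g_le: "g A \<le> g (A \<union> B)" "g B \<le> g (A \<union> B)"
    using D by (auto intro: mono_onD[OF g(2)])
  have f_super: "f A + f B \<le> f (A \<inter> B) + f (A \<union> B)"
    and g_super: "g A + g B \<le> g (A \<inter> B) + g (A \<union> B)"
    using D f(1) g(1) unfolding supermodular_on_def by auto
  have "(f A + f B - f (A \<inter> B)) * g (A \<union> B) \<le> f (A \<union> B) * g (A \<union> B)"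
    using f_super g(3)[OF D(4)] by (intro mult_right_mono) auto
  moreover have "f (A \<inter> B) * (g (A \<union> B) - g A) \<le> f A * (g (A \<union> B) - g A)"
    using f_le g_le by (intro mult_right_mono) auto
  moreover have "f (A \<inter> B) * (g (A \<union> B) - g B) \<le> f B * (g (A \<union> B) - g B)"
    using f_le g_le by (intro mult_right_mono) auto
  moreover have "0 \<le> f (A \<inter> B) * (g (A \<inter> B) + g (A \<union> B) - g A - g B)"
    using f(3)[OF D(3)] g_super by simp
  ultimately show "f A * g A + f B * g B \<le> f (A \<inter> B) * g (A \<inter> B) + f (A \<union> B) * g (A \<union> B)"
    unfolding ring_distribs by linarith
qed

lemma piS_mono:
  assumes "finite X" "\<And>x. x \<in> X \<Longrightarrow> 0 \<le> w x" "A \<subseteq> B" "B \<subseteq> X"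
  shows "piS w A \<le> piS w B"
  unfolding piS_def using assms by (intro sum_mono2) (auto intro: finite_subset)

lemma supermodular_on_inverse_piS:
  assumes "finite X" "\<And>x. x \<in> X \<Longrightarrow> 0 \<le> w x" "\<And>S. S \<in> D \<Longrightarrow> S \<subseteq> X \<and> 0 < piS w S"
  shows "supermodular_on D (\<lambda>S. 1 / piS w S)"
  unfolding supermodular_on_def
proof (intro ballI impI)
  fix A B assume D: "A \<in> D" "B \<in> D" "A \<inter> B \<in> D" "A \<union> B \<in> D"
  then have X: "A \<subseteq> X" "B \<subseteq> X" using assms(3) by auto
  have modular: "piS w (A \<union> B) + piS w (A \<inter> B) = piS w A + piS w B"
    unfolding piS_def using X assms(1) by (intro sum.union_inter) (auto intro: finite_subset)
  have mono: "piS w (A \<inter> B) \<le> piS w A" "piS w (A \<inter> B) \<le> piS w B"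
    "piS w A \<le> piS w (A \<union> B)" "piS w B \<le> piS w (A \<union> B)"
    using X by (auto intro!: piS_mono[OF assms(1,2)])
  show "1 / piS w A + 1 / piS w B \<le> 1 / piS w (A \<inter> B) + 1 / piS w (A \<union> B)"
    by (rule reciprocal_add_le_extremes) (use modular mono assms(3)[OF D(3)] in linarith)+
qed

lemma supermodular_on_double_sum:
  fixes w :: "'a \<Rightarrow> 'a \<Rightarrow> real"
  assumes "finite X" "\<And>x y. x \<in> X \<Longrightarrow> y \<in> X \<Longrightarrow> 0 \<le> w x y" "\<And>S. S \<in> D \<Longrightarrow> S \<subseteq> X"
  shows "supermodular_on D (\<lambda>S. \<Sum>x\<in>S. \<Sum>y\<in>S. w x y)"
  unfolding supermodular_on_def sum.cartesian_product
proof (intro ballI impI)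
  fix A B assume "A \<in> D" "B \<in> D" "A \<inter> B \<in> D" "A \<union> B \<in> D"
  then have X: "A \<union> B \<subseteq> X" using assms(3) by auto
  then have fin: "finite A" "finite B" using assms(1) by (auto intro: finite_subset)
  let ?w = "\<lambda>(x, y). w x y"
  have "sum ?w (A \<times> A) + sum ?w (B \<times> B) = sum ?w (A \<times> A \<union> B \<times> B) + sum ?w (A \<times> A \<inter> B \<times> B)"
    using fin by (intro sum.union_inter[symmetric]) auto
  also have "sum ?w (A \<times> A \<union> B \<times> B) \<le> sum ?w ((A \<union> B) \<times> (A \<union> B))"
  proof (rule sum_mono2)
    show "finite ((A \<union> B) \<times> (A \<union> B))" using fin by simp
    show "A \<times> A \<union> B \<times> B \<subseteq> (A \<union> B) \<times> (A \<union> B)" by auto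
    show "0 \<le> ?w p" if "p \<in> (A \<union> B) \<times> (A \<union> B) - (A \<times> A \<union> B \<times> B)" for p
      using that X assms(2) by auto
  qed
  finally show "sum ?w (A \<times> A) + sum ?w (B \<times> B) \<le> sum ?w ((A \<inter> B) \<times> (A \<inter> B)) + sum ?w ((A \<union> B) \<times> (A \<union> B))"
    by (simp add: Times_Int_Times)
qed

lemma mono_on_double_sum:
  fixes w :: "'a \<Rightarrow> 'a \<Rightarrow> real"
  assumes "finite X" "\<And>x y. x \<in> X \<Longrightarrow> y \<in> X \<Longrightarrow> 0 \<le> w x y" "\<And>S. S \<in> D \<Longrightarrow> S \<subseteq> X"
  shows "mono_on D (\<lambda>S. \<Sum>x\<in>S. \<Sum>y\<in>S. w x y)"
  unfolding sum.cartesian_product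
proof (rule mono_onI)
  fix A B assume "A \<in> D" "B \<in> D" "A \<subseteq> B"
  moreover have "B \<subseteq> X" using \<open>B \<in> D\<close> assms(3) by auto
  moreover from this have "finite B" using assms(1) by (rule finite_subset)
  ultimately show "(\<Sum>(x, y)\<in>A \<times> A. w x y) \<le> (\<Sum>(x, y)\<in>B \<times> B. w x y)"
    using assms(2) by (intro sum_mono2) (auto simp: subset_iff)
qed

definition flow :: "(nat \<Rightarrow> real) \<Rightarrow> (nat \<Rightarrow> nat \<Rightarrow> real) \<Rightarrow> nat set \<Rightarrow> nat set \<Rightarrow> real" where
  "flow \<pi> P A B = (\<Sum>x\<in>A. \<Sum>y\<in>B. \<pi> x * P x y)"

definition frob_inner ::
    "nat \<Rightarrow> (nat \<Rightarrow> real) \<Rightarrow> (nat \<Rightarrow> nat \<Rightarrow> real) \<Rightarrow> (nat \<Rightarrow> nat \<Rightarrow> real) \<Rightarrow> real" where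
  "frob_inner n \<pi> M N = (\<Sum>z\<in>{1..n}. \<Sum>x\<in>{1..n}. \<pi> z * M z x * N z x / \<pi> x)"

lemma frob_sq_eq_frob_inner: "frob_sq n \<pi> M = frob_inner n \<pi> M M"
  unfolding frob_sq_def frob_inner_def mtrace_def mmult_def adjoint_def
  by (subst sum.swap) (simp add: mult_ac)

lemma frob_inner_commute: "frob_inner n \<pi> M N = frob_inner n \<pi> N M"
  unfolding frob_inner_def by (simp add: mult_ac)

lemma frob_inner_expand:
  fixes a b :: real and M N R :: "nat \<Rightarrow> nat \<Rightarrow> real"
  defines "C \<equiv> \<lambda>z x. a * M z x + b * N z x - R z x"
  shows "frob_inner n \<pi> C C =
    a\<^sup>2 * frob_inner n \<pi> M M + b\<^sup>2 * frob_inner n \<pi> N N + frob_inner n \<pi> R R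
    + 2 * a * b * frob_inner n \<pi> M N - 2 * a * frob_inner n \<pi> M R - 2 * b * frob_inner n \<pi> N R"
proof -
  have "\<pi> z * C z x * C z x / \<pi> x =
      a\<^sup>2 * (\<pi> z * M z x * M z x / \<pi> x) + b\<^sup>2 * (\<pi> z * N z x * N z x / \<pi> x) + \<pi> z * R z x * R z x / \<pi> x
      + 2 * a * b * (\<pi> z * M z x * N z x / \<pi> x) - 2 * a * (\<pi> z * M z x * R z x / \<pi> x)
      - 2 * b * (\<pi> z * N z x * R z x / \<pi> x)" for z x
    unfolding C_def divide_inverse power2_eq_square by algebra
  then show ?thesis
    unfolding frob_inner_def by (simp only: sum.distrib sum_subtractf sum_distrib_left)
qed

lemma msub_A_alpha:
  "msub (A_alpha n \<pi> P \<alpha> S) (PiM \<pi>) = (\<lambda>z x. \<alpha> * P z x + (1 - \<alpha>) * G_S n \<pi> S z x - PiM \<pi> z x)"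
  unfolding msub_def A_alpha_def by simp

lemma blk_subset: "S \<subseteq> {1..n} \<Longrightarrow> blk n S z \<subseteq> {1..n}"
  unfolding blk_def compl_def by auto

lemma sum_over_blk:
  assumes "S \<subseteq> {1..n}"
  shows "(\<Sum>z\<in>{1..n}. h z (blk n S z)) = (\<Sum>z\<in>S. h z S) + (\<Sum>z\<in>compl n S. h z (compl n S))"
proof -
  have "(\<Sum>z\<in>{1..n}. h z (blk n S z)) = (\<Sum>z\<in>compl n S. h z (blk n S z)) + (\<Sum>z\<in>S. h z (blk n S z))"
    unfolding compl_def using assms by (intro sum.subset_diff) auto
  also have "\<dots> = (\<Sum>z\<in>compl n S. h z (compl n S)) + (\<Sum>z\<in>S. h z S)"
    by (intro arg_cong2[where f = "(+)"] sum.cong) (auto simp: blk_def compl_def)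
  finally show ?thesis by (simp only: add.commute)
qed

locale markov_chain =
  fixes n :: nat and \<pi> :: "nat \<Rightarrow> real" and P :: "nat \<Rightarrow> nat \<Rightarrow> real"
  assumes prob_dist: "prob_dist_pos n \<pi>" and stochastic: "transition_matrix n P"
begin

abbreviation nontrivial_sets :: "nat set set" where
  "nontrivial_sets \<equiv> {S. S \<subseteq> {1..n} \<and> 0 < piS \<pi> S \<and> piS \<pi> S < 1}"

lemma pi_pos: "x \<in> {1..n} \<Longrightarrow> 0 < \<pi> x"
  using prob_dist unfolding prob_dist_pos_def by auto

lemma pi_nonneg: "x \<in> {1..n} \<Longrightarrow> 0 \<le> \<pi> x"
  using pi_pos by (simp add: less_imp_le)

lemma piS_total: "piS \<pi> {1..n} = 1"
  using prob_dist unfolding prob_dist_pos_def piS_def by auto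

lemma P_nonneg: "x \<in> {1..n} \<Longrightarrow> y \<in> {1..n} \<Longrightarrow> 0 \<le> P x y"
  using stochastic unfolding transition_matrix_def by auto

lemma P_row_sum: "x \<in> {1..n} \<Longrightarrow> (\<Sum>y\<in>{1..n}. P x y) = 1"
  using stochastic unfolding transition_matrix_def by auto

lemma piS_pos: "S \<subseteq> {1..n} \<Longrightarrow> S \<noteq> {} \<Longrightarrow> 0 < piS \<pi> S"
  unfolding piS_def using pi_pos by (intro sum_pos) (auto intro: finite_subset)

lemma piS_proper_pos:
  assumes "S \<subseteq> {1..n}" "S \<noteq> {}" "S \<noteq> {1..n}"
  shows "0 < piS \<pi> S" "0 < piS \<pi> (compl n S)"
  using assms by (auto simp: compl_def intro!: piS_pos)

lemma piS_compl: "S \<subseteq> {1..n} \<Longrightarrow> piS \<pi> (compl n S) = 1 - piS \<pi> S"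
  using sum.subset_diff[of S "{1..n}" \<pi>] piS_total unfolding piS_def compl_def by simp

lemma compl_nontrivial: "S \<in> nontrivial_sets \<Longrightarrow> {1..n} - S \<in> nontrivial_sets"
  using piS_compl unfolding compl_def by auto

lemma flow_total:
  assumes "A \<subseteq> {1..n}"
  shows "flow \<pi> P A {1..n} = piS \<pi> A"
  unfolding flow_def piS_def
proof (intro sum.cong refl)
  fix x assume "x \<in> A"
  then have "x \<in> {1..n}" using assms by blast
  then show "(\<Sum>y\<in>{1..n}. \<pi> x * P x y) = \<pi> x"
    using P_row_sum by (simp add: sum_distrib_left[symmetric])
qed

lemma flow_self:
  assumes "S \<subseteq> {1..n}"
  shows "flow \<pi> P S S = piS \<pi> S - flow \<pi> P S (compl n S)"
proof -
  have "flow \<pi> P S {1..n} = flow \<pi> P S (compl n S) + flow \<pi> P S S"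
    unfolding flow_def compl_def sum.distrib[symmetric]
    using assms by (intro sum.cong refl sum.subset_diff) auto
  then show ?thesis using flow_total[OF assms] by simp
qed

lemma frob_inner_PiM_right: "frob_inner n \<pi> M (PiM \<pi>) = (\<Sum>z\<in>{1..n}. \<Sum>x\<in>{1..n}. \<pi> z * M z x)"
  unfolding frob_inner_def PiM_def using pi_pos by (intro sum.cong) (auto simp: less_imp_neq[symmetric])

lemma frob_inner_PiM_stochastic:
  assumes "\<And>z. z \<in> {1..n} \<Longrightarrow> (\<Sum>x\<in>{1..n}. M z x) = 1"
  shows "frob_inner n \<pi> M (PiM \<pi>) = 1"
  unfolding frob_inner_PiM_right using assms piS_total
  by (simp add: sum_distrib_left[symmetric] piS_def)

lemma frob_inner_G_S_right:
  assumes "S \<subseteq> {1..n}"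
  shows "frob_inner n \<pi> M (G_S n \<pi> S) = (\<Sum>z\<in>{1..n}. \<pi> z * (\<Sum>x\<in>blk n S z. M z x) / piS \<pi> (blk n S z))"
proof -
  have "(\<Sum>x\<in>{1..n}. \<pi> z * M z x * G_S n \<pi> S z x / \<pi> x)
      = (\<Sum>x\<in>{1..n}. if x \<in> blk n S z then \<pi> z * M z x / piS \<pi> (blk n S z) else 0)" for z
    using pi_pos by (intro sum.cong) (auto simp: G_S_def less_imp_neq[symmetric])
  also have "\<dots> z = (\<Sum>x\<in>blk n S z. \<pi> z * M z x / piS \<pi> (blk n S z))" for z
    using blk_subset[OF assms, of z] by (simp add: sum.inter_restrict[symmetric] Int_absorb1)
  finally show ?thesis
    unfolding frob_inner_def by (simp add: sum_distrib_left sum_divide_distrib)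
qed

lemma piS_blk_pos:
  assumes "S \<subseteq> {1..n}" "S \<noteq> {}" "S \<noteq> {1..n}"
  shows "0 < piS \<pi> (blk n S z)"
  using piS_proper_pos[OF assms] by (simp add: blk_def)

lemma sum_G_S_blk:
  assumes "S \<subseteq> {1..n}" "S \<noteq> {}" "S \<noteq> {1..n}"
  shows "(\<Sum>x\<in>blk n S z. G_S n \<pi> S z x) = 1"
  using piS_blk_pos[OF assms, of z]
  by (simp add: G_S_def sum_divide_distrib[symmetric] piS_def)

lemma frob_inner_G_S_G_S:
  assumes "S \<subseteq> {1..n}" "S \<noteq> {}" "S \<noteq> {1..n}"
  shows "frob_inner n \<pi> (G_S n \<pi> S) (G_S n \<pi> S) = 2"
proof -
  have "frob_inner n \<pi> (G_S n \<pi> S) (G_S n \<pi> S) = (\<Sum>z\<in>{1..n}. \<pi> z / piS \<pi> (blk n S z))"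
    unfolding frob_inner_G_S_right[OF assms(1)] sum_G_S_blk[OF assms] by simp
  also have "\<dots> = (\<Sum>z\<in>S. \<pi> z / piS \<pi> S) + (\<Sum>z\<in>compl n S. \<pi> z / piS \<pi> (compl n S))"
    by (rule sum_over_blk[OF assms(1)])
  also have "\<dots> = 2"
    using piS_proper_pos[OF assms] by (simp add: sum_divide_distrib[symmetric] piS_def[symmetric])
  finally show ?thesis .
qed

lemma frob_inner_G_S_PiM:
  assumes "S \<subseteq> {1..n}" "S \<noteq> {}" "S \<noteq> {1..n}"
  shows "frob_inner n \<pi> (G_S n \<pi> S) (PiM \<pi>) = 1"
proof -
  have "piS \<pi> (blk n S z) \<noteq> 0" for z
    using piS_blk_pos[OF assms, of z] by linarith
  then have "frob_inner n \<pi> (PiM \<pi>) (G_S n \<pi> S) = (\<Sum>z\<in>{1..n}. \<pi> z)"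
    unfolding frob_inner_G_S_right[OF assms(1)] PiM_def by (simp add: piS_def)
  then show ?thesis using piS_total by (simp add: frob_inner_commute piS_def)
qed

end

locale reversible_chain = markov_chain +
  assumes reversible: "reversible n \<pi> P"
begin

lemma detailed_balance: "x \<in> {1..n} \<Longrightarrow> y \<in> {1..n} \<Longrightarrow> \<pi> x * P x y = \<pi> y * P y x"
  using reversible unfolding reversible_def by auto

lemma flow_commute: "A \<subseteq> {1..n} \<Longrightarrow> B \<subseteq> {1..n} \<Longrightarrow> flow \<pi> P A B = flow \<pi> P B A"
  unfolding flow_def by (subst sum.swap, intro sum.cong refl) (metis detailed_balance subsetD)

lemma flow_compl_self:
  assumes "S \<subseteq> {1..n}"
  shows "flow \<pi> P (compl n S) (compl n S) = piS \<pi> (compl n S) - flow \<pi> P S (compl n S)"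
proof -
  have "compl n (compl n S) = S" using assms unfolding compl_def by auto
  then show ?thesis
    using flow_self[of "compl n S"] flow_commute[of S "compl n S"] assms
    unfolding compl_def by auto
qed

lemma frob_inner_P_P: "frob_inner n \<pi> P P = mtrace n (mmult n P P)"
proof -
  have "\<pi> z * P z x * P z x / \<pi> x = P z x * P x z" if "z \<in> {1..n}" "x \<in> {1..n}" for z x
    using detailed_balance[OF that] pi_pos[OF that(2)] by (simp add: field_simps)
  then show ?thesis unfolding frob_inner_def mtrace_def mmult_def by simp
qed

lemma frob_inner_P_G_S:
  assumes "S \<subseteq> {1..n}" "S \<noteq> {}" "S \<noteq> {1..n}"
  shows "frob_inner n \<pi> P (G_S n \<pi> S) = 2 - gS n \<pi> P S"
proof -
  define a b q where "a = piS \<pi> S" and "b = piS \<pi> (compl n S)" and "q = flow \<pi> P S (compl n S)"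
  have pos: "0 < a" "0 < b" using piS_proper_pos[OF assms] unfolding a_def b_def .
  have "frob_inner n \<pi> P (G_S n \<pi> S)
      = (\<Sum>z\<in>S. \<pi> z * (\<Sum>x\<in>S. P z x) / a) + (\<Sum>z\<in>compl n S. \<pi> z * (\<Sum>x\<in>compl n S. P z x) / b)"
    unfolding frob_inner_G_S_right[OF assms(1)] a_def b_def by (rule sum_over_blk[OF assms(1)])
  also have "\<dots> = flow \<pi> P S S / a + flow \<pi> P (compl n S) (compl n S) / b"
    unfolding flow_def by (simp add: sum_divide_distrib sum_distrib_left)
  also have "\<dots> = (a - q) / a + (b - q) / b"
    unfolding flow_self[OF assms(1)] flow_compl_self[OF assms(1)] a_def b_def q_def ..
  also have "\<dots> = 2 - q * (a + b) / (a * b)"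
    using pos by (simp add: field_simps)
  also have "\<dots> = 2 - q / (a * b)"
    using piS_compl[OF assms(1)] unfolding a_def b_def by simp
  finally show ?thesis unfolding gS_def a_def b_def q_def flow_def .
qed

lemma frob_sq_A_alpha:
  assumes "S \<subseteq> {1..n}" "S \<noteq> {}" "S \<noteq> {1..n}"
  shows "frob_sq n \<pi> (msub (A_alpha n \<pi> P \<alpha> S) (PiM \<pi>))
    = \<alpha>^2 * mtrace n (mmult n P P) - 2 * \<alpha> * (1 - \<alpha>) * gS n \<pi> P S + 1 - 2 * \<alpha>^2"
proof -
  have P_PiM: "frob_inner n \<pi> P (PiM \<pi>) = 1"
    by (rule frob_inner_PiM_stochastic) (rule P_row_sum)
  have PiM_PiM: "frob_inner n \<pi> (PiM \<pi>) (PiM \<pi>) = 1"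
    by (rule frob_inner_PiM_stochastic) (use piS_total in \<open>simp add: PiM_def piS_def\<close>)
  have "frob_sq n \<pi> (msub (A_alpha n \<pi> P \<alpha> S) (PiM \<pi>))
      = \<alpha>\<^sup>2 * mtrace n (mmult n P P) + (1 - \<alpha>)\<^sup>2 * 2 + 1
        + 2 * \<alpha> * (1 - \<alpha>) * (2 - gS n \<pi> P S) - 2 * \<alpha> - 2 * (1 - \<alpha>)"
    unfolding frob_sq_eq_frob_inner msub_A_alpha frob_inner_expand frob_inner_P_P
      frob_inner_G_S_G_S[OF assms] frob_inner_P_G_S[OF assms] frob_inner_G_S_PiM[OF assms]
      P_PiM PiM_PiM
    by simp
  then show ?thesis by (simp add: algebra_simps power2_eq_square)
qed

lemma F1_minus_F2:
  assumes "S \<subseteq> {1..n}" "S \<noteq> {}" "S \<noteq> {1..n}"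
  shows "F1 n \<pi> P \<alpha> S - F2 n \<pi> P \<alpha> S
    = \<alpha>^2 * mtrace n (mmult n P P) - 2 * \<alpha> * (1 - \<alpha>) * gS n \<pi> P S + 1 - 2 * \<alpha>^2"
proof -
  define a b q where "a = piS \<pi> S" and "b = piS \<pi> (compl n S)" and "q = flow \<pi> P S (compl n S)"
  have pos: "0 < a" "0 < b" using piS_proper_pos[OF assms] unfolding a_def b_def .
  have b_eq: "b = 1 - a" using piS_compl[OF assms(1)] unfolding a_def b_def .
  have "(b - q) / a + (a - q) / b - 1 / (a * b) = ((b - q) * b + (a - q) * a - 1) / (a * b)"
    using pos by (simp add: field_simps)
  also have "(b - q) * b + (a - q) * a - 1 = -2 * (a * b) - q"
    unfolding b_eq by (simp add: algebra_simps)
  also have "(-2 * (a * b) - q) / (a * b) = -2 - q / (a * b)"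
    using pos by (simp add: field_simps)
  finally have key: "(b - q) / a + (a - q) / b - 1 / (a * b) = -2 - q / (a * b)" .
  have "F1 n \<pi> P \<alpha> S - F2 n \<pi> P \<alpha> S
      = 2 * \<alpha> * (1 - \<alpha>) * ((b - q) / a + (a - q) / b - 1 / (a * b))
        - 6 * \<alpha>\<^sup>2 + 4 * \<alpha> + 1 + \<alpha>\<^sup>2 * mtrace n (mmult n P P)"
    unfolding F1_def F2_def flow_def[symmetric] flow_self[OF assms(1)] flow_compl_self[OF assms(1)]
      a_def[symmetric] b_def[symmetric] q_def[symmetric]
    by (simp add: algebra_simps diff_divide_distrib)
  then show ?thesis
    unfolding key gS_def flow_def[symmetric] a_def[symmetric] b_def[symmetric] q_def[symmetric]
    by (simp add: algebra_simps power2_eq_square)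
qed

end

context markov_chain
begin

lemma flow_weight_nonneg: "x \<in> {1..n} \<Longrightarrow> y \<in> {1..n} \<Longrightarrow> 0 \<le> \<pi> x * P x y"
  using pi_pos P_nonneg by (simp add: less_imp_le)

lemma supermodular_on_inverse_piS_nontrivial: "supermodular_on nontrivial_sets (\<lambda>S. 1 / piS \<pi> S)"
  by (rule supermodular_on_inverse_piS[where X = "{1..n}", OF _ pi_nonneg]) auto

lemma supermodular_on_inverse_piS_compl:
  "supermodular_on nontrivial_sets (\<lambda>S. 1 / piS \<pi> ({1..n} - S))"
  by (rule supermodular_on_compl[OF supermodular_on_inverse_piS_nontrivial compl_nontrivial])

lemma mono_on_inverse_piS_compl: "mono_on nontrivial_sets (\<lambda>S. 1 / piS \<pi> ({1..n} - S))"
proof (rule mono_onI)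
  fix A B assume "A \<in> nontrivial_sets" "B \<in> nontrivial_sets" "A \<subseteq> B"
  have le: "piS \<pi> ({1..n} - B) \<le> piS \<pi> ({1..n} - A)"
    using \<open>A \<subseteq> B\<close> by (intro piS_mono[where X = "{1..n}", OF _ pi_nonneg]) auto
  have "{1..n} - B \<in> nontrivial_sets" by (rule compl_nontrivial) fact
  then have pos: "0 < piS \<pi> ({1..n} - B)" by simp
  show "1 / piS \<pi> ({1..n} - A) \<le> 1 / piS \<pi> ({1..n} - B)"
    using le pos by (intro divide_left_mono) simp_all
qed

lemma supermodular_on_F2:
  assumes "0 \<le> \<alpha>" "\<alpha> \<le> 1"
  shows "supermodular_on nontrivial_sets (F2 n \<pi> P \<alpha>)"
proof -
  define k where "k = 6 * \<alpha>^2 - 4 * \<alpha> - 1 - \<alpha>^2 * mtrace n (mmult n P P)"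
  have eq: "F2 n \<pi> P \<alpha> S = 2 * \<alpha> * (1 - \<alpha>) * (1 / piS \<pi> S + 1 / piS \<pi> ({1..n} - S)) + k"
    if "S \<in> nontrivial_sets" for S
  proof -
    define p where "p = piS \<pi> S"
    have p: "0 < p" "0 < 1 - p" using that unfolding p_def by simp_all
    have compl_eq: "piS \<pi> ({1..n} - S) = 1 - p"
      using piS_compl that unfolding compl_def p_def by auto
    have "2 * \<alpha> * (1 - \<alpha>) / (p * (1 - p)) = 2 * \<alpha> * (1 - \<alpha>) * (1 / p + 1 / (1 - p))"
      using p by (simp add: field_simps)
    then show ?thesis unfolding F2_def compl_def k_def compl_eq p_def[symmetric] by simp
  qed
  have "supermodular_on nontrivial_sets
      (\<lambda>S. 2 * \<alpha> * (1 - \<alpha>) * (1 / piS \<pi> S + 1 / piS \<pi> ({1..n} - S)) + k)"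
    using assms supermodular_on_inverse_piS_nontrivial supermodular_on_inverse_piS_compl
    by (intro supermodular_on_affine supermodular_on_add) simp_all
  then show ?thesis by (rule supermodular_on_cong[THEN iffD2, rotated]) (rule eq)
qed

lemma supermodular_on_F1:
  assumes "0 \<le> \<alpha>" "\<alpha> \<le> 1"
  shows "supermodular_on nontrivial_sets (F1 n \<pi> P \<alpha>)"
proof -
  define h where "h S = flow \<pi> P S S * (1 / piS \<pi> ({1..n} - S))" for S
  have h: "supermodular_on nontrivial_sets h"
    unfolding h_def
  proof (rule supermodular_on_mult)
    show "supermodular_on nontrivial_sets (\<lambda>S. flow \<pi> P S S)"
      unfolding flow_def by (rule supermodular_on_double_sum[where X = "{1..n}", OF _ flow_weight_nonneg]) auto
    show "mono_on nontrivial_sets (\<lambda>S. flow \<pi> P S S)"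
      unfolding flow_def by (rule mono_on_double_sum[where X = "{1..n}", OF _ flow_weight_nonneg]) auto
    show "0 \<le> flow \<pi> P S S" if "S \<in> nontrivial_sets" for S
      using that unfolding flow_def by (intro sum_nonneg) (blast intro: flow_weight_nonneg)
    show "0 \<le> 1 / piS \<pi> ({1..n} - S)" if "S \<in> nontrivial_sets" for S
      using compl_nontrivial[OF that] by simp
  qed (fact supermodular_on_inverse_piS_compl mono_on_inverse_piS_compl)+
  have "supermodular_on nontrivial_sets (\<lambda>S. h ({1..n} - S))"
    using h compl_nontrivial by (rule supermodular_on_compl)
  then have "supermodular_on nontrivial_sets (\<lambda>S. 2 * \<alpha> * (1 - \<alpha>) * (h ({1..n} - S) + h S) + 0)"
    using assms h by (intro supermodular_on_affine supermodular_on_add) simp_all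
  moreover have eq: "F1 n \<pi> P \<alpha> S = 2 * \<alpha> * (1 - \<alpha>) * (h ({1..n} - S) + h S) + 0"
    if "S \<in> nontrivial_sets" for S
  proof -
    have "{1..n} - ({1..n} - S) = S" using that by auto
    then show ?thesis unfolding F1_def h_def flow_def compl_def by simp
  qed
  ultimately show ?thesis by (rule supermodular_on_cong[THEN iffD2, rotated])
qed

end

theorem corollary4p14:
  fixes n :: nat and \<pi> :: "nat \<Rightarrow> real" and P :: "nat \<Rightarrow> nat \<Rightarrow> real" and \<alpha> :: real
  assumes "prob_dist_pos n \<pi>"
    and "transition_matrix n P"
    and "reversible n \<pi> P"
    and "0 \<le> \<alpha>" and "\<alpha> \<le> 1"
  shows "(\<forall>S. S \<subseteq> {1..n} \<and> S \<noteq> {} \<and> S \<noteq> {1..n} \<longrightarrow>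
            frob_sq n \<pi> (msub (A_alpha n \<pi> P \<alpha> S) (PiM \<pi>))
              = \<alpha>^2 * mtrace n (mmult n P P) - 2 * \<alpha> * (1 - \<alpha>) * gS n \<pi> P S + 1 - 2 * \<alpha>^2
          \<and> \<alpha>^2 * mtrace n (mmult n P P) - 2 * \<alpha> * (1 - \<alpha>) * gS n \<pi> P S + 1 - 2 * \<alpha>^2
              = F1 n \<pi> P \<alpha> S - F2 n \<pi> P \<alpha> S)
     \<and> supermodular_on {S. S \<subseteq> {1..n} \<and> 0 < piS \<pi> S \<and> piS \<pi> S < 1} (F1 n \<pi> P \<alpha>)
     \<and> supermodular_on {S. S \<subseteq> {1..n} \<and> 0 < piS \<pi> S \<and> piS \<pi> S < 1} (F2 n \<pi> P \<alpha>)"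
proof -
  interpret reversible_chain n \<pi> P
    using assms(1-3) by unfold_locales
  show ?thesis
    using frob_sq_A_alpha F1_minus_F2 supermodular_on_F1[OF assms(4,5)] supermodular_on_F2[OF assms(4,5)]
    by simp
qed

end
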